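(* For every graph $G$ there exists a graph $H$ such that $|H|=|G|+1$, $G$ is an induced subgraph of $H$, and $\alpha_{\mathrm{od}}(H)=\alpha(H)=\alpha(G)+1$.
   Context: An odd independent set in $G=(V,E)$ is an independent set $S$ such that every $v\in V\setminus S$ has either no neighbor or an odd number of neighbors in $S$; $\alpha_{\mathrm{od}}(G)$ is its maximum size; $\alpha$ is the independence number; $|G|$ is the number of vertices. *)

theory Defs
  imports Main
begin

definition graph :: "'a set \<Rightarrow> ('a \<times> 'a) set \<Rightarrow> bool" where
  "graph V E \<longleftrightarrow> finite V \<and> E \<subseteq> V \<times> V \<and> sym E \<and> irrefl E"

definition indep_set :: "'a set \<Rightarrow> ('a \<times> 'a) set \<Rightarrow> 'a set \<Rightarrow> bool" where
  "indep_set V E S \<longleftrightarrow> S \<subseteq> V \<and> (\<forall>u\<in>S. \<forall>v\<in>S. (u, v) \<notin> E)"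

definition odd_indep_set :: "'a set \<Rightarrow> ('a \<times> 'a) set \<Rightarrow> 'a set \<Rightarrow> bool" where
  "odd_indep_set V E S \<longleftrightarrow> indep_set V E S \<and>
     (\<forall>v\<in>V - S. card {u\<in>S. (v, u) \<in> E} = 0 \<or> odd (card {u\<in>S. (v, u) \<in> E}))"

definition alpha :: "'a set \<Rightarrow> ('a \<times> 'a) set \<Rightarrow> nat" where
  "alpha V E = Max (card ` {S. indep_set V E S})"

definition alpha_od :: "'a set \<Rightarrow> ('a \<times> 'a) set \<Rightarrow> nat" where
  "alpha_od V E = Max (card ` {S. odd_indep_set V E S})"

definition induced_subgraph_of ::
  "'a set \<Rightarrow> ('a \<times> 'a) set \<Rightarrow> 'b set \<Rightarrow> ('b \<times> 'b) set \<Rightarrow> bool" where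
  "induced_subgraph_of V E W F \<longleftrightarrow>
     (\<exists>f. inj_on f V \<and> f ` V \<subseteq> W \<and>
          (\<forall>u\<in>V. \<forall>v\<in>V. ((u, v) \<in> E \<longleftrightarrow> (f u, f v) \<in> F)))"

end

theory Submission
  imports Defs
begin

text \<open>Extend G by a new vertex adjacent exactly to those vertices outside a maximum
  independent set I that have an even number of neighbours in I. Then I together with
  the new vertex is independent, and every other vertex sees an odd number of its
  elements: its odd count in I, or its even count in I plus the new vertex. Since the
  new vertex raises the independence number by at most one, this set is a maximum
  independent set and a maximum odd independent set of the extension.\<close>

lemma Max_card_eqI:
  assumes "\<And>S. P S \<Longrightarrow> card S \<le> n" and "P S\<^sub>0" and "card S\<^sub>0 = n"
  shows "Max (card ` {S. P S}) = n"
proof -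
  have "card ` {S. P S} \<subseteq> {..n}"
    using assms(1) by auto
  then have "finite (card ` {S. P S})"
    by (rule finite_subset) simp
  then show ?thesis
    using assms by (intro Max_eqI) auto
qed

lemma finite_indep_sets:
  assumes "finite V"
  shows "finite {S. indep_set V E S}"
proof (rule finite_subset)
  show "{S. indep_set V E S} \<subseteq> Pow V"
    by (auto simp: indep_set_def)
qed (simp add: assms)

lemma finite_indep_set:
  assumes "finite V" and "indep_set V E S"
  shows "finite S"
  using assms finite_subset[of S V] by (simp add: indep_set_def)

lemma card_le_alpha:
  assumes "finite V" and "indep_set V E S"
  shows "card S \<le> alpha V E"
  unfolding alpha_def using assms(2)
  by (intro Max_ge finite_imageI finite_indep_sets assms(1)) auto

lemma alpha_attained:
  assumes "finite V"
  obtains I where "indep_set V E I" and "card I = alpha V E"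
proof -
  have "alpha V E \<in> card ` {S. indep_set V E S}"
    unfolding alpha_def
    by (intro Max_in finite_imageI finite_indep_sets assms) (auto simp: indep_set_def)
  then show ?thesis
    using that by auto
qed

definition apex_edges :: "('a \<times> 'a) set \<Rightarrow> 'a set \<Rightarrow> ('a option \<times> 'a option) set" where
  "apex_edges E B =
     map_prod Some Some ` E \<union> (\<lambda>v. (None, Some v)) ` B \<union> (\<lambda>v. (Some v, None)) ` B"

lemma apex_edges_simps [simp]:
  "(Some u, Some v) \<in> apex_edges E B \<longleftrightarrow> (u, v) \<in> E"
  "(None, Some v) \<in> apex_edges E B \<longleftrightarrow> v \<in> B"
  "(Some v, None) \<in> apex_edges E B \<longleftrightarrow> v \<in> B"
  "(None, None) \<notin> apex_edges E B"
  by (auto simp: apex_edges_def)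

lemma graph_apex:
  assumes "graph V E" and "B \<subseteq> V"
  shows "graph (insert None (Some ` V)) (apex_edges E B)"
  unfolding graph_def
proof (intro conjI)
  show "finite (insert None (Some ` V))"
    using assms(1) by (simp add: graph_def)
  show "apex_edges E B \<subseteq> insert None (Some ` V) \<times> insert None (Some ` V)"
    using assms by (auto simp: graph_def apex_edges_def)
  show "sym (apex_edges E B)"
  proof (rule symI)
    fix x y
    assume "(x, y) \<in> apex_edges E B"
    then show "(y, x) \<in> apex_edges E B"
      using assms(1) by (cases x; cases y) (auto simp: graph_def dest: symD)
  qed
  show "irrefl (apex_edges E B)"
  proof (rule irreflI)
    fix x
    show "(x, x) \<notin> apex_edges E B"
      using assms(1) by (cases x) (auto simp: graph_def irrefl_def)
  qed
qed

lemma induced_subgraph_apex: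
  "induced_subgraph_of V E (insert None (Some ` V)) (apex_edges E B)"
  unfolding induced_subgraph_of_def by (intro exI[of _ Some]) auto

lemma card_indep_set_apex_le:
  assumes "finite V" and "indep_set (insert None (Some ` V)) (apex_edges E B) T"
  shows "card T \<le> alpha V E + 1"
proof -
  define S where "S = {v. Some v \<in> T}"
  have "indep_set V E S"
    unfolding indep_set_def
  proof (intro conjI ballI)
    show "S \<subseteq> V"
      using assms(2) by (auto simp: S_def indep_set_def)
    fix u v
    assume "u \<in> S" and "v \<in> S"
    then have "(Some u, Some v) \<notin> apex_edges E B"
      using assms(2) unfolding S_def indep_set_def by blast
    then show "(u, v) \<notin> E"
      by simp
  qed
  then have "finite S" and "card S \<le> alpha V E"
    using assms(1) by (simp_all add: finite_indep_set card_le_alpha)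
  have "T \<subseteq> insert None (Some ` S)"
  proof
    fix x
    assume "x \<in> T"
    then show "x \<in> insert None (Some ` S)"
      by (cases x) (auto simp: S_def)
  qed
  then have "card T \<le> card (insert None (Some ` S))"
    using \<open>finite S\<close> by (intro card_mono) auto
  also have "\<dots> = card S + 1"
    using \<open>finite S\<close> by (simp add: card_image)
  finally show ?thesis
    using \<open>card S \<le> alpha V E\<close> by linarith
qed

lemma indep_set_apex_insert_None:
  assumes "indep_set V E I" and "I \<inter> B = {}"
  shows "indep_set (insert None (Some ` V)) (apex_edges E B) (insert None (Some ` I))"
  using assms by (auto simp: indep_set_def)

definition even_neighbours :: "'a set \<Rightarrow> ('a \<times> 'a) set \<Rightarrow> 'a set \<Rightarrow> 'a set" where
  "even_neighbours V E I = {v \<in> V - I. even (card {u \<in> I. (v, u) \<in> E})}"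

lemma odd_indep_set_apex_even_neighbours:
  assumes "finite V" and "indep_set V E I"
  shows "odd_indep_set (insert None (Some ` V)) (apex_edges E (even_neighbours V E I))
           (insert None (Some ` I))"
    (is "odd_indep_set ?W ?F ?J")
  unfolding odd_indep_set_def
proof (intro conjI ballI)
  show "indep_set ?W ?F ?J"
    using assms(2) by (intro indep_set_apex_insert_None) (auto simp: even_neighbours_def)
  have "finite I"
    using assms by (rule finite_indep_set)
  fix w
  assume "w \<in> ?W - ?J"
  then obtain v where w: "w = Some v" and v: "v \<in> V - I"
    by auto
  define c where "c = card {u \<in> I. (v, u) \<in> E}"
  have "{u \<in> ?J. (w, u) \<in> ?F} =
          Some ` {u \<in> I. (v, u) \<in> E} \<union> (if even c then {None} else {})"
    using w v by (auto simp: even_neighbours_def c_def)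
  then have "card {u \<in> ?J. (w, u) \<in> ?F} = (if even c then c + 1 else c)"
    using \<open>finite I\<close> by (auto simp: card_image c_def)
  then show "card {u \<in> ?J. (w, u) \<in> ?F} = 0 \<or> odd (card {u \<in> ?J. (w, u) \<in> ?F})"
    by auto
qed

theorem proposition17:
  fixes V :: "'a set" and E :: "('a \<times> 'a) set"
  assumes "graph V E"
  shows "\<exists>(W :: 'a option set) F. graph W F \<and> card W = card V + 1 \<and>
           induced_subgraph_of V E W F \<and>
           alpha_od W F = alpha W F \<and> alpha W F = alpha V E + 1"
proof -
  have "finite V"
    using assms by (simp add: graph_def)
  then obtain I where I: "indep_set V E I" "card I = alpha V E"
    by (rule alpha_attained)
  define W where "W = insert None (Some ` V)"
  define F where "F = apex_edges E (even_neighbours V E I)"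
  define J where "J = insert None (Some ` I)"
  have odd_J: "odd_indep_set W F J"
    unfolding W_def F_def J_def
    using \<open>finite V\<close> I(1) by (rule odd_indep_set_apex_even_neighbours)
  have card_J: "card J = alpha V E + 1"
    using I finite_indep_set[OF \<open>finite V\<close>] by (simp add: J_def card_image)
  have bound: "card T \<le> alpha V E + 1" if "indep_set W F T" for T
    using card_indep_set_apex_le \<open>finite V\<close> that unfolding W_def F_def by blast
  have "alpha W F = alpha V E + 1"
    unfolding alpha_def[of W F] using bound odd_J card_J
    by (intro Max_card_eqI) (auto simp: odd_indep_set_def)
  moreover have "alpha_od W F = alpha V E + 1"
    unfolding alpha_od_def[of W F] using bound odd_J card_J
    by (intro Max_card_eqI) (auto simp: odd_indep_set_def)
  moreover have "graph W F"
    unfolding W_def F_def using assms by (rule graph_apex) (auto simp: even_neighbours_def)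
  moreover have "card W = card V + 1"
    using \<open>finite V\<close> by (simp add: W_def card_image)
  moreover have "induced_subgraph_of V E W F"
    unfolding W_def F_def by (rule induced_subgraph_apex)
  ultimately show ?thesis
    by (intro exI[of _ W] exI[of _ F]) simp
qed

end
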